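(* Let $C=\mathbb{S}^1\times\mathbb{R}$ be the flat Euclidean cylinder, $\theta_0\in\mathbb{S}^1$, $v=\{\theta_0\}\times\mathbb{R}$, and let $f:C\to C$ be a geodesic-preserving bijection with $f(v)=v$, $f(\theta_0,0)=(\theta_0,0)$ and $f(\theta_0,1)=(\theta_0,1)$. Then $f$ maps vertical geodesics to vertical geodesics and slant geodesics to slant geodesics.
   Context: $C$ carries the product of the flat metric on $\mathbb{S}^1=\mathbb{R}/\mathbb{Z}$ and the standard metric on $\mathbb{R}$. A geodesic is the image of a locally isometric immersion of the whole real line; a bijection (not assumed continuous) is geodesic-preserving if it maps every geodesic onto a geodesic as a set. Vertical geodesics are the lines $\{\theta\}\times\mathbb{R}$, horizontal geodesics are the circles $\mathbb{S}^1\times\{r\}$, and slant geodesics are all other geodesics. *)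

theory Defs
  imports "HOL-Analysis.Analysis"
begin

text \<open>The flat cylinder C = S^1 x R with S^1 = R/Z.  A point of S^1 is represented
by its unique representative in [0,1); so C is the carrier set
[0,1) x R inside real x real.\<close>

definition cyl :: "(real \<times> real) set" where
  "cyl = {0..<1} \<times> UNIV"

definition circ_dist :: "real \<Rightarrow> real \<Rightarrow> real" where
  "circ_dist a b = min \<bar>a - b\<bar> (1 - \<bar>a - b\<bar>)"

definition cyl_dist :: "real \<times> real \<Rightarrow> real \<times> real \<Rightarrow> real" where
  "cyl_dist p q = sqrt ((circ_dist (fst p) (fst q))\<^sup>2 + (snd p - snd q)\<^sup>2)"

definition local_isometry_line :: "(real \<Rightarrow> real \<times> real) \<Rightarrow> bool" where
  "local_isometry_line \<gamma> \<longleftrightarrow> range \<gamma> \<subseteq> cyl \<and>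
     (\<forall>t. \<exists>e>0. \<forall>s s'. \<bar>s - t\<bar> < e \<and> \<bar>s' - t\<bar> < e \<longrightarrow>
         cyl_dist (\<gamma> s) (\<gamma> s') = \<bar>s - s'\<bar>)"

definition geodesic :: "(real \<times> real) set \<Rightarrow> bool" where
  "geodesic G \<longleftrightarrow> (\<exists>\<gamma>. local_isometry_line \<gamma> \<and> G = range \<gamma>)"

definition vertical :: "(real \<times> real) set \<Rightarrow> bool" where
  "vertical G \<longleftrightarrow> (\<exists>\<theta>\<in>{0..<1}. G = {\<theta>} \<times> UNIV)"

definition horizontal :: "(real \<times> real) set \<Rightarrow> bool" where
  "horizontal G \<longleftrightarrow> (\<exists>r. G = {0..<1} \<times> {r})"

definition slant :: "(real \<times> real) set \<Rightarrow> bool" where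
  "slant G \<longleftrightarrow> geodesic G \<and> \<not> vertical G \<and> \<not> horizontal G"

definition geodesic_preserving :: "(real \<times> real \<Rightarrow> real \<times> real) \<Rightarrow> bool" where
  "geodesic_preserving f \<longleftrightarrow> bij_betw f cyl cyl \<and>
     (\<forall>G. geodesic G \<longrightarrow> geodesic (f ` G))"

end

theory Submission
  imports Defs
begin

text \<open>Every geodesic of the flat cylinder is the image of a unit-speed straight line of the
plane under the covering map (x, y) \<mapsto> (x mod 1, y): a local isometry lifts locally to a
distance-preserving, hence affine, map into the plane, and the direction of the lift is locally
constant and therefore constant. Consequently distinct vertical lines are disjoint, a horizontal
circle meets every vertical line once, and a slant geodesic winds around the cylinder and meets
every vertical line at least twice. An injective geodesic-preserving map fixing v setwise
preserves the intersection pattern with v: a vertical line other than v goes to a geodesic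
missing v, which must be vertical, and a slant geodesic goes to a geodesic other than v meeting
v twice, which must be slant.\<close>

lemma dist_preserving_imp_affine:
  fixes P :: "real \<Rightarrow> 'a::real_inner"
  assumes iso: "\<And>s s'. s \<in> I \<Longrightarrow> s' \<in> I \<Longrightarrow> dist (P s) (P s') = dist s s'"
    and I: "s \<in> I" "t \<in> I" "t' \<in> I" and "t \<noteq> t'"
  shows "P s = P t + ((s - t) / (t' - t)) *\<^sub>R (P t' - P t)"
proof -
  define x w c where "x = P s - P t" and "w = P t' - P t" and "c = (s - t) / (t' - t)"
  have nx: "norm x = \<bar>s - t\<bar>" and nw: "norm w = \<bar>t' - t\<bar>" and nxw: "norm (x - w) = \<bar>s - t'\<bar>"
    using iso[of s t] iso[of t' t] iso[of s t'] I
    by (simp_all add: x_def w_def dist_norm dist_real_def)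
  \<comment> \<open>Polarization: the three distances determine the inner product, which forces \<open>x = c w\<close>.\<close>
  have xw: "inner x w = (s - t) * (t' - t)"
    using dot_norm_neg[of x w] by (simp add: nx nw nxw power2_eq_square algebra_simps)
  have "(norm (x - c *\<^sub>R w))\<^sup>2 = (norm x)\<^sup>2 - 2 * c * inner x w + c\<^sup>2 * (norm w)\<^sup>2"
    unfolding power2_norm_eq_inner
    by (simp add: inner_commute power2_eq_square algebra_simps)
  also have "\<dots> = (s - t - c * (t' - t))\<^sup>2"
    by (simp add: nx nw xw power2_eq_square algebra_simps)
  also have "\<dots> = 0"
    using \<open>t \<noteq> t'\<close> by (simp add: c_def)
  finally have "x = c *\<^sub>R w" by simp
  then show ?thesis by (simp add: x_def w_def c_def algebra_simps)
qed

definition cyl_proj :: "real \<times> real \<Rightarrow> real \<times> real" where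
  "cyl_proj p = (frac (fst p), snd p)"

lemma cyl_proj_in_cyl: "cyl_proj p \<in> cyl"
  by (simp add: cyl_proj_def cyl_def frac_lt_1)

lemma cyl_proj_cyl: "p \<in> cyl \<Longrightarrow> cyl_proj p = p"
  by (auto simp: cyl_proj_def cyl_def)

lemma cyl_proj_add_cyl_proj: "cyl_proj (cyl_proj p + q) = cyl_proj (p + q)"
  by (simp add: cyl_proj_def)

lemma cyl_proj_add_Ints: "x \<in> \<int> \<Longrightarrow> cyl_proj (p + (x, 0)) = cyl_proj p"
  by (simp add: cyl_proj_def frac_add_int_right)

lemma circ_dist_eq_abs_diff_int:
  assumes "a \<in> {0..<1}" "b \<in> {0..<1}" "\<bar>a - b - of_int k\<bar> \<le> 1/2"
  shows "circ_dist a b = \<bar>a - b - of_int k\<bar>"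
proof -
  have "k \<in> {-1, 0, 1}"
    using assms by (auto simp: abs_if split: if_split_asm)
  then show ?thesis
    using assms by (auto simp: circ_dist_def abs_if min_def)
qed

lemma circ_dist_le_cyl_dist: "circ_dist (fst p) (fst q) \<le> cyl_dist p q"
  unfolding cyl_dist_def by (rule real_sqrt_sum_squares_ge1)

lemma cyl_dist_eq_dist_add_of_int:
  assumes "p \<in> cyl" "q \<in> cyl" "\<bar>fst p - fst q - of_int k\<bar> \<le> 1/2"
  shows "cyl_dist p q = dist p (q + (of_int k, 0))"
proof -
  have "circ_dist (fst p) (fst q) = \<bar>fst p - fst q - of_int k\<bar>"
    using assms by (intro circ_dist_eq_abs_diff_int) (auto simp: cyl_def)
  then show ?thesis
    by (simp add: cyl_dist_def dist_prod_def dist_real_def algebra_simps)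
qed

lemma local_isometry_line_in_cyl: "local_isometry_line \<gamma> \<Longrightarrow> \<gamma> s \<in> cyl"
  unfolding local_isometry_line_def by blast

lemma local_isometry_line_local_lift:
  assumes "local_isometry_line \<gamma>"
  obtains e P where "e > 0" "\<And>s. cyl_proj (P s) = \<gamma> s"
    "\<And>s s'. s \<in> ball t e \<Longrightarrow> s' \<in> ball t e \<Longrightarrow> dist (P s) (P s') = dist s s'"
proof -
  obtain e0 where "e0 > 0" and iso0: "\<And>s s'. \<bar>s - t\<bar> < e0 \<Longrightarrow> \<bar>s' - t\<bar> < e0 \<Longrightarrow>
      cyl_dist (\<gamma> s) (\<gamma> s') = \<bar>s - s'\<bar>"
    using assms unfolding local_isometry_line_def by metis
  define e where "e = min e0 (1/4)"
  have "e > 0" and iso: "\<And>s s'. \<bar>s - t\<bar> < e \<Longrightarrow> \<bar>s' - t\<bar> < e \<Longrightarrow>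
      cyl_dist (\<gamma> s) (\<gamma> s') = \<bar>s - s'\<bar>"
    using \<open>e0 > 0\<close> iso0 by (auto simp: e_def)
  \<comment> \<open>Unwrap the angle by the integer nearest to its jump from \<open>\<gamma> t\<close>; for \<open>e \<le> 1/4\<close> the
      unwrapped angles of two nearby parameters differ by less than \<open>1/2\<close>, where the circle
      distance is the ordinary one.\<close>
  define k where "k s = round (fst (\<gamma> s) - fst (\<gamma> t))" for s
  define P where "P s = \<gamma> s + (of_int (- k s), 0)" for s
  have \<gamma>_cyl: "\<gamma> s \<in> cyl" for s
    using assms by (rule local_isometry_line_in_cyl)
  have P_near: "\<bar>fst (P s) - fst (\<gamma> t)\<bar> < 1/4" if "\<bar>s - t\<bar> < e" for s
  proof -
    have "\<bar>fst (\<gamma> s) - fst (\<gamma> t) - of_int (k s)\<bar> \<le> 1/2"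
      unfolding k_def by (metis abs_minus_commute of_int_round_abs_le)
    then have "\<bar>fst (P s) - fst (\<gamma> t)\<bar> = circ_dist (fst (\<gamma> s)) (fst (\<gamma> t))"
      using \<gamma>_cyl[of s] \<gamma>_cyl[of t]
      by (subst circ_dist_eq_abs_diff_int) (auto simp: P_def cyl_def mem_Times_iff algebra_simps)
    also have "\<dots> \<le> cyl_dist (\<gamma> s) (\<gamma> t)"
      by (rule circ_dist_le_cyl_dist)
    also have "\<dots> = \<bar>s - t\<bar>"
      using iso[OF that, of t] \<open>e > 0\<close> by simp
    finally show ?thesis
      using that by (simp add: e_def)
  qed
  show ?thesis
  proof
    show "e > 0" by fact
    show "cyl_proj (P s) = \<gamma> s" for s
      by (simp add: P_def cyl_proj_add_Ints cyl_proj_cyl \<gamma>_cyl)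
    fix s s' assume "s \<in> ball t e" "s' \<in> ball t e"
    then have near: "\<bar>s - t\<bar> < e" "\<bar>s' - t\<bar> < e"
      by (auto simp: dist_real_def abs_minus_commute)
    have "\<bar>fst (\<gamma> s) - fst (\<gamma> s') - of_int (k s - k s')\<bar> \<le> 1/2"
      using P_near[OF near(1)] P_near[OF near(2)] by (simp add: P_def abs_if split: if_split_asm)
    then have "cyl_dist (\<gamma> s) (\<gamma> s') = dist (\<gamma> s) (\<gamma> s' + (of_int (k s - k s'), 0))"
      by (rule cyl_dist_eq_dist_add_of_int[OF \<gamma>_cyl \<gamma>_cyl])
    also have "\<dots> = dist (P s) (P s')"
      unfolding dist_norm by (rule arg_cong[where f = norm]) (simp add: P_def prod_eq_iff)
    finally show "dist (P s) (P s') = dist s s'"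
      using iso[OF near] by (simp add: dist_real_def)
  qed
qed

definition straight_at :: "(real \<Rightarrow> real \<times> real) \<Rightarrow> real \<Rightarrow> real \<times> real \<Rightarrow> real \<times> real \<Rightarrow> bool"
  where "straight_at \<gamma> t u p \<longleftrightarrow> norm u = 1 \<and> p \<in> cyl \<and>
    (\<forall>\<^sub>F s in nhds t. \<gamma> s = cyl_proj (p + s *\<^sub>R u))"

lemma local_isometry_line_straight_at:
  assumes "local_isometry_line \<gamma>"
  shows "\<exists>u p. straight_at \<gamma> t u p"
proof -
  obtain e P where "e > 0" and P_lifts: "\<And>s. cyl_proj (P s) = \<gamma> s"
    and P_iso: "\<And>s s'. s \<in> ball t e \<Longrightarrow> s' \<in> ball t e \<Longrightarrow> dist (P s) (P s') = dist s s'"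
    using local_isometry_line_local_lift[OF assms] by metis
  define t' where "t' = t + e/2"
  define u where "u = (1 / (t' - t)) *\<^sub>R (P t' - P t)"
  have I: "t \<in> ball t e" "t' \<in> ball t e" "t \<noteq> t'"
    using \<open>e > 0\<close> by (auto simp: t'_def dist_real_def)
  have \<gamma>_line: "\<gamma> s = cyl_proj (cyl_proj (P t - t *\<^sub>R u) + s *\<^sub>R u)" if "s \<in> ball t e" for s
  proof -
    have "P s = P t + ((s - t) / (t' - t)) *\<^sub>R (P t' - P t)"
      by (rule dist_preserving_imp_affine[OF P_iso that I])
    also have "\<dots> = P t + (s - t) *\<^sub>R u"
      by (simp add: u_def)
    also have "\<dots> = (P t - t *\<^sub>R u) + s *\<^sub>R u"
      by (simp add: scaleR_diff_left)
    finally have "P s = (P t - t *\<^sub>R u) + s *\<^sub>R u" .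
    then show ?thesis
      by (metis P_lifts cyl_proj_add_cyl_proj)
  qed
  have "norm u = 1"
    using P_iso[OF I(2,1)] I(3) by (simp add: u_def dist_norm dist_real_def)
  moreover have "\<forall>\<^sub>F s in nhds t. \<gamma> s = cyl_proj (cyl_proj (P t - t *\<^sub>R u) + s *\<^sub>R u)"
    using eventually_nhds_ball[OF \<open>e > 0\<close>] by eventually_elim (rule \<gamma>_line)
  ultimately show ?thesis
    using cyl_proj_in_cyl unfolding straight_at_def by blast
qed

lemma frac_affine_eq_imp_eq:
  fixes a b c d t :: real
  assumes "\<forall>\<^sub>F s in nhds t. frac (a + s * b) = frac (c + s * d)"
  shows "b = d" "frac a = frac c"
proof -
  obtain \<delta> where "\<delta> > 0" and \<delta>: "\<And>s. s \<in> ball t \<delta> \<Longrightarrow> frac (a + s * b) = frac (c + s * d)"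
    using assms unfolding eventually_nhds_metric by (metis mem_ball dist_commute)
  have Ints: "a - c + s * (b - d) \<in> \<int>" if "s \<in> ball t \<delta>" for s
    using \<delta>[OF that] by (auto simp: algebra_simps elim!: frac_eqE)
  define h where "h = min (\<delta>/2) (1 / (\<bar>b - d\<bar> + 1))"
  have "h * \<bar>b - d\<bar> \<le> 1 / (\<bar>b - d\<bar> + 1) * \<bar>b - d\<bar>"
    by (intro mult_right_mono) (auto simp: h_def)
  also have "\<dots> < 1"
    by (simp add: field_simps)
  finally have h: "0 < h" "t + h \<in> ball t \<delta>" "\<bar>h * (b - d)\<bar> < 1"
    using \<open>\<delta> > 0\<close> by (auto simp: h_def dist_real_def abs_mult)
  have "h * (b - d) \<in> \<int>"
    using Ints_diff[OF Ints[OF h(2)] Ints[of t]] \<open>\<delta> > 0\<close> by (simp add: algebra_simps)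
  then show "b = d"
    using Ints_nonzero_abs_less1 h(1,3) by fastforce
  then have "a - c \<in> \<int>"
    using Ints[of t] \<open>\<delta> > 0\<close> by simp
  then show "frac a = frac c"
    using frac_add_int_right[of "a - c" c] by simp
qed

lemma cyl_proj_line_unique:
  assumes eq: "\<forall>\<^sub>F s in nhds t. cyl_proj (p + s *\<^sub>R u) = cyl_proj (q + s *\<^sub>R v)"
    and "p \<in> cyl" "q \<in> cyl"
  shows "(u, p) = (v, q)"
proof -
  have "\<forall>\<^sub>F s in nhds t. frac (fst p + s * fst u) = frac (fst q + s * fst v)"
    using eq by eventually_elim (simp add: cyl_proj_def)
  then have fst_eq: "fst u = fst v" "frac (fst p) = frac (fst q)"
    by (rule frac_affine_eq_imp_eq)+
  have snd_eq: "\<forall>\<^sub>F s in nhds t. snd p + s * snd u = snd q + s * snd v"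
    using eq by eventually_elim (simp add: cyl_proj_def)
  then have "\<forall>\<^sub>F s in nhds t. frac (snd p + s * snd u) = frac (snd q + s * snd v)"
    by eventually_elim simp
  then have "snd u = snd v"
    by (rule frac_affine_eq_imp_eq)
  with eventually_nhds_x_imp_x[OF snd_eq] have "snd p = snd q"
    by simp
  with fst_eq \<open>snd u = snd v\<close> show ?thesis
    using \<open>p \<in> cyl\<close> \<open>q \<in> cyl\<close> by (auto simp: cyl_def prod_eq_iff)
qed

lemma straight_at_unique:
  assumes "straight_at \<gamma> t u p" "straight_at \<gamma> t v q"
  shows "(u, p) = (v, q)"
proof (rule cyl_proj_line_unique)
  show "\<forall>\<^sub>F s in nhds t. cyl_proj (p + s *\<^sub>R u) = cyl_proj (q + s *\<^sub>R v)"
    using assms unfolding straight_at_def by (auto elim: eventually_elim2)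
  show "p \<in> cyl" "q \<in> cyl"
    using assms unfolding straight_at_def by blast+
qed

lemma straight_at_eventually:
  assumes "straight_at \<gamma> t u p"
  shows "\<forall>\<^sub>F s in nhds t. straight_at \<gamma> s u p"
proof -
  have "\<forall>\<^sub>F s in nhds t. \<forall>\<^sub>F r in nhds s. \<gamma> r = cyl_proj (p + r *\<^sub>R u)"
    using assms unfolding straight_at_def eventually_eventually by blast
  then show ?thesis
    by (rule eventually_mono) (use assms in \<open>simp add: straight_at_def\<close>)
qed

lemma local_isometry_line_straight:
  assumes "local_isometry_line \<gamma>"
  shows "\<exists>u p. norm u = 1 \<and> (\<forall>s. \<gamma> s = cyl_proj (p + s *\<^sub>R u))"
proof -
  define \<Phi> where "\<Phi> t = (THE x. straight_at \<gamma> t (fst x) (snd x))" for t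
  have unique: "\<exists>!x. straight_at \<gamma> t (fst x) (snd x)" for t
    using local_isometry_line_straight_at[OF assms, of t] straight_at_unique
    by (metis fst_conv prod.collapse snd_conv)
  have \<Phi>: "straight_at \<gamma> t (fst (\<Phi> t)) (snd (\<Phi> t))" for t
    unfolding \<Phi>_def using unique by (rule theI')
  have "\<forall>\<^sub>F s in nhds t. \<Phi> t = \<Phi> s" for t
    using straight_at_eventually[OF \<Phi>[of t]]
    by eventually_elim (metis \<Phi>_def the1_equality[OF unique])
  then have \<Phi>_const: "\<Phi> s = \<Phi> 0" for s
    by (intro connected_local_const[of UNIV]) (auto simp: eventually_nhds_conv_at)
  have "straight_at \<gamma> s (fst (\<Phi> 0)) (snd (\<Phi> 0))" for s
    using \<Phi>[of s] unfolding \<Phi>_const[of s] .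
  then show ?thesis
    unfolding straight_at_def by (blast dest: eventually_nhds_x_imp_x)
qed

lemma geodesic_straight:
  assumes "geodesic G"
  obtains u p where "norm u = 1" "G = range (\<lambda>s. cyl_proj (p + s *\<^sub>R u))"
  using assms local_isometry_line_straight unfolding geodesic_def by fastforce

lemma geodesic_subset_cyl: "geodesic G \<Longrightarrow> G \<subseteq> cyl"
  unfolding geodesic_def using local_isometry_line_in_cyl by blast

lemma vertical_imp_geodesic:
  assumes "vertical G"
  shows "geodesic G"
proof -
  obtain \<theta> where "\<theta> \<in> {0..<1}" and G: "G = {\<theta>} \<times> UNIV"
    using assms unfolding vertical_def by blast
  then have "local_isometry_line (Pair \<theta>)"
    unfolding local_isometry_line_def
    by (auto simp: cyl_def cyl_dist_def circ_dist_def intro: exI[of _ 1])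
  moreover have "G = range (Pair \<theta>)"
    using G by auto
  ultimately show ?thesis
    unfolding geodesic_def by blast
qed

lemma slant_straight_direction:
  assumes "slant (range (\<lambda>s. cyl_proj (p + s *\<^sub>R u)))" "norm u = 1"
  shows "fst u \<noteq> 0" "snd u \<noteq> 0"
proof -
  let ?G = "range (\<lambda>s. cyl_proj (p + s *\<^sub>R u))"
  have "(fst u)\<^sup>2 + (snd u)\<^sup>2 = 1"
    using assms(2) by (simp add: norm_prod_def)
  show "fst u \<noteq> 0"
  proof
    assume "fst u = 0"
    with \<open>(fst u)\<^sup>2 + (snd u)\<^sup>2 = 1\<close> have "snd u \<noteq> 0"
      by auto
    have "(frac (fst p), y) \<in> ?G" for y
      by (rule range_eqI[of _ _ "(y - snd p) / snd u"])
        (use \<open>fst u = 0\<close> \<open>snd u \<noteq> 0\<close> in \<open>simp add: cyl_proj_def\<close>)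
    then have "?G = {frac (fst p)} \<times> UNIV"
      using \<open>fst u = 0\<close> by (auto simp: cyl_proj_def)
    then have "vertical ?G"
      unfolding vertical_def by (intro bexI[of _ "frac (fst p)"]) (auto simp: frac_lt_1)
    then show False
      using assms(1) by (simp add: slant_def)
  qed
  show "snd u \<noteq> 0"
  proof
    assume "snd u = 0"
    with \<open>(fst u)\<^sup>2 + (snd u)\<^sup>2 = 1\<close> have "fst u \<noteq> 0"
      by auto
    have "(x, snd p) \<in> ?G" if "x \<in> {0..<1}" for x
      by (rule range_eqI[of _ _ "(x - fst p) / fst u"])
        (use that \<open>snd u = 0\<close> \<open>fst u \<noteq> 0\<close> in \<open>simp add: cyl_proj_def\<close>)
    then have "?G = {0..<1} \<times> {snd p}"
      using \<open>snd u = 0\<close> by (auto simp: cyl_proj_def frac_lt_1)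
    then have "horizontal ?G"
      unfolding horizontal_def by blast
    then show False
      using assms(1) by (simp add: slant_def)
  qed
qed

lemma slant_meets_vertical_twice:
  assumes "slant G" "\<theta> \<in> {0..<1}"
  shows "\<exists>x y. x \<noteq> y \<and> x \<in> G \<inter> {\<theta>} \<times> UNIV \<and> y \<in> G \<inter> {\<theta>} \<times> UNIV"
proof -
  obtain u p where "norm u = 1" and G: "G = range (\<lambda>s. cyl_proj (p + s *\<^sub>R u))"
    using assms(1) unfolding slant_def by (blast elim: geodesic_straight)
  then have "fst u \<noteq> 0" "snd u \<noteq> 0"
    using assms(1) slant_straight_direction by blast+
  define s where "s k = (\<theta> + k - fst p) / fst u" for k
  have "(\<theta>, snd p + s k * snd u) \<in> G" if "k \<in> {0, 1}" for k
    unfolding G by (rule range_eqI[of _ _ "s k"])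
      (use that \<open>fst u \<noteq> 0\<close> assms(2) in \<open>auto simp: s_def cyl_proj_def frac_1_eq\<close>)
  moreover have "snd p + s 0 * snd u \<noteq> snd p + s 1 * snd u"
    using \<open>fst u \<noteq> 0\<close> \<open>snd u \<noteq> 0\<close> by (simp add: s_def divide_simps)
  ultimately show ?thesis
    by (intro exI[of _ "(\<theta>, snd p + s 0 * snd u)"] exI[of _ "(\<theta>, snd p + s 1 * snd u)"]) auto
qed

lemma slant_iff_meets_vertical_twice:
  assumes "\<theta> \<in> {0..<1}"
  shows "slant G \<longleftrightarrow> geodesic G \<and> G \<noteq> {\<theta>} \<times> UNIV \<and>
    (\<exists>x y. x \<noteq> y \<and> x \<in> G \<inter> {\<theta>} \<times> UNIV \<and> y \<in> G \<inter> {\<theta>} \<times> UNIV)"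
proof
  assume "slant G"
  moreover have "vertical ({\<theta>} \<times> UNIV)"
    using assms unfolding vertical_def by blast
  ultimately show "geodesic G \<and> G \<noteq> {\<theta>} \<times> UNIV \<and>
      (\<exists>x y. x \<noteq> y \<and> x \<in> G \<inter> {\<theta>} \<times> UNIV \<and> y \<in> G \<inter> {\<theta>} \<times> UNIV)"
    using slant_meets_vertical_twice[OF _ assms] unfolding slant_def by blast
next
  assume "geodesic G \<and> G \<noteq> {\<theta>} \<times> UNIV \<and>
      (\<exists>x y. x \<noteq> y \<and> x \<in> G \<inter> {\<theta>} \<times> UNIV \<and> y \<in> G \<inter> {\<theta>} \<times> UNIV)"
  then obtain x y where "geodesic G" "G \<noteq> {\<theta>} \<times> UNIV" "x \<noteq> y"
    and "x \<in> G \<inter> {\<theta>} \<times> UNIV" "y \<in> G \<inter> {\<theta>} \<times> UNIV"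
    by blast
  moreover from this have "\<not> vertical G"
    unfolding vertical_def by (auto simp: mem_Times_iff)
  moreover from calculation have "\<not> horizontal G"
    unfolding horizontal_def by (auto simp: mem_Times_iff prod_eq_iff)
  ultimately show "slant G"
    unfolding slant_def by blast
qed

lemma geodesic_disjoint_vertical_imp_vertical:
  assumes "geodesic G" "\<theta> \<in> {0..<1}" "G \<inter> {\<theta>} \<times> UNIV = {}"
  shows "vertical G"
proof -
  have "\<not> horizontal G"
    using assms(2,3) unfolding horizontal_def by (auto simp: Times_Int_Times)
  moreover have "\<not> slant G"
    using assms(2,3) slant_meets_vertical_twice by blast
  ultimately show ?thesis
    using assms(1) unfolding slant_def by blast
qed

lemma geodesic_preserving_image_Int_vertical:
  assumes "geodesic_preserving f" "\<theta> \<in> {0..<1}" "f ` ({\<theta>} \<times> UNIV) = {\<theta>} \<times> UNIV"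
    and "geodesic G"
  shows "f ` G \<inter> {\<theta>} \<times> UNIV = f ` (G \<inter> {\<theta>} \<times> UNIV)"
proof -
  have "inj_on f cyl"
    using assms(1) by (simp add: geodesic_preserving_def bij_betw_def)
  moreover have "G \<subseteq> cyl" "{\<theta>} \<times> UNIV \<subseteq> cyl"
    using geodesic_subset_cyl[OF assms(4)] assms(2) by (auto simp: cyl_def)
  ultimately show ?thesis
    using inj_on_image_Int assms(3) by metis
qed

lemma geodesic_preserving_image_vertical:
  assumes "geodesic_preserving f" "\<theta> \<in> {0..<1}" "f ` ({\<theta>} \<times> UNIV) = {\<theta>} \<times> UNIV"
    and "vertical G"
  shows "vertical (f ` G)"
proof (cases "G = {\<theta>} \<times> UNIV")
  case True
  then show ?thesis
    using assms(2,3) unfolding vertical_def by auto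
next
  case False
  then have "G \<inter> {\<theta>} \<times> UNIV = {}"
    using assms(4) by (auto simp: vertical_def)
  then have "f ` G \<inter> {\<theta>} \<times> UNIV = {}"
    using geodesic_preserving_image_Int_vertical[OF assms(1-3) vertical_imp_geodesic[OF assms(4)]]
    by simp
  moreover have "geodesic (f ` G)"
    using assms(1,4) vertical_imp_geodesic unfolding geodesic_preserving_def by blast
  ultimately show ?thesis
    using geodesic_disjoint_vertical_imp_vertical assms(2) by blast
qed

lemma geodesic_preserving_image_slant:
  assumes "geodesic_preserving f" "\<theta> \<in> {0..<1}" "f ` ({\<theta>} \<times> UNIV) = {\<theta>} \<times> UNIV"
    and "slant G"
  shows "slant (f ` G)"
proof -
  define V where "V = {\<theta>} \<times> (UNIV :: real set)"
  note slant_iff = slant_iff_meets_vertical_twice[OF assms(2), folded V_def]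
  obtain x y where G: "geodesic G" "G \<noteq> V" and xy: "x \<noteq> y" "x \<in> G \<inter> V" "y \<in> G \<inter> V"
    using assms(4) unfolding slant_iff by blast
  have inj: "inj_on f cyl" and "geodesic (f ` G)"
    using assms(1) G(1) unfolding geodesic_preserving_def bij_betw_def by auto
  have "G \<subseteq> cyl" "V \<subseteq> cyl"
    using geodesic_subset_cyl[OF G(1)] assms(2) by (auto simp: V_def cyl_def)
  have "f ` G \<inter> V = f ` (G \<inter> V)"
    using geodesic_preserving_image_Int_vertical[OF assms(1-3) G(1)] by (simp add: V_def)
  then have "f x \<noteq> f y" "f x \<in> f ` G \<inter> V" "f y \<in> f ` G \<inter> V"
    using inj_on_contraD[OF inj xy(1)] xy \<open>G \<subseteq> cyl\<close> by auto
  moreover have "f ` G \<noteq> V"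
    using inj_on_image_eq_iff[OF inj \<open>G \<subseteq> cyl\<close> \<open>V \<subseteq> cyl\<close>] assms(3) G(2) by (simp add: V_def)
  ultimately show ?thesis
    unfolding slant_iff using \<open>geodesic (f ` G)\<close> by blast
qed

theorem lemma4p3:
  fixes f :: "real \<times> real \<Rightarrow> real \<times> real" and \<theta>\<^sub>0 :: real
  assumes "\<theta>\<^sub>0 \<in> {0..<1}"
    and "geodesic_preserving f"
    and "f ` ({\<theta>\<^sub>0} \<times> UNIV) = {\<theta>\<^sub>0} \<times> UNIV"
    and "f (\<theta>\<^sub>0, 0) = (\<theta>\<^sub>0, 0)"
    and "f (\<theta>\<^sub>0, 1) = (\<theta>\<^sub>0, 1)"
  shows "(\<forall>G. vertical G \<longrightarrow> vertical (f ` G)) \<and> (\<forall>G. slant G \<longrightarrow> slant (f ` G))"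
  using geodesic_preserving_image_vertical[OF assms(2,1,3)]
    geodesic_preserving_image_slant[OF assms(2,1,3)] by blast

end
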